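(* There is a universal constant $C>0$ such that for all integers $m,n\ge1$ and all $p,q\in[0,2/3]$, \[ (1-Cm^{-1/3})P(m-1,n,p,q)-2m^{-2}\le P(m,n,p,q)\le(1+Cn^{-1/3})P(m,n-1,p,q)+2n^{-2}. \]
   Context: For integers $m,n\ge0$ and $p,q\in[0,1]$, $P(m,n,p,q)=\Pr(Y\ge X)$ where $X\sim\mathrm{Binom}(m,\max\{p,q\})$ and $Y\sim\mathrm{Binom}(n,\min\{p,q\})$ are independent. *)

theory Defs
  imports "HOL-Probability.Probability"
begin

definition Pgap :: "nat \<Rightarrow> nat \<Rightarrow> real \<Rightarrow> real \<Rightarrow> real" where
  "Pgap m n p q =
     measure_pmf.prob
       (pair_pmf (binomial_pmf m (max p q)) (binomial_pmf n (min p q)))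
       {xy. snd xy \<ge> fst xy}"

end

theory Submission
  imports Defs
begin

text \<open>
  Write v for the cube root of the number of trials of the variable that grows. By Pascal's rule,
  one more trial for X \<sim> Bin(m - 1, a) lowers the CDF of X at j by a P(X = j), and one more trial
  for Y \<sim> Bin(n - 1, b) raises the tail of Y from i + 1 on by b P(Y = i). Both inequalities
  therefore reduce to a local estimate for a binomial law with parameter at most 2/3: a P(X = k) is
  at most C/v times P(X \<le> k) plus v^-6, and b P(Y = k) at most C/v times P(Y > k) plus v^-6.
  Since the ratio P(k)/P(k + 1) is monotone in k, near the mean the L \<approx> a v points next to k
  each carry at least P(k)/3, which gives the first term; at distance about v^2 from the mean
  the probabilities decay geometrically over v^2/396 steps, which gives the second. The single
  event X = Y = n is not covered by the tail of Y and is bounded separately.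
\<close>

lemma one_third_le_power_ratio:
  assumes "1 \<le> L"
  shows "1 / 3 \<le> (real L / (real L + 1)) ^ L"
proof -
  have "(1 + 1 / real L) ^ L \<le> exp (1 / real L) ^ L"
    using assms by (intro power_mono) (auto simp: exp_ge_add_one_self)
  also have "\<dots> = exp 1"
    using assms by (simp add: exp_of_nat_mult[symmetric])
  also have "\<dots> \<le> 3"
    by (rule exp_le)
  finally have bound: "(1 + 1 / real L) ^ L \<le> 3" .
  have "(real L / (real L + 1)) ^ L = 1 / (1 + 1 / real L) ^ L"
    using assms by (simp add: power_divide field_simps)
  also have "\<dots> \<ge> 1 / 3"
    using bound by (intro divide_left_mono) (auto intro!: zero_less_power add_pos_nonneg)
  finally show ?thesis .
qed

text \<open>Bernoulli's inequality applied to twelve blocks of \<open>s div 12\<close> factors.\<close>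
lemma sixth_power_le_one_plus_power:
  fixes e v :: real
  assumes "0 < e" "24 \<le> s" "0 \<le> v" "v \<le> (real s * e / 24) ^ 2"
  shows "v ^ 6 \<le> (1 + e) ^ s"
proof -
  define q where "q = s div 12"
  have "real s / 24 \<le> real q"
    using assms(2) unfolding q_def by linarith
  then have "real s / 24 * e \<le> real q * e"
    using assms(1) by (simp add: mult_right_mono)
  then have "real s * e / 24 \<le> 1 + real q * e"
    by simp
  have "v ^ 6 \<le> ((real s * e / 24) ^ 2) ^ 6"
    using assms by (intro power_mono) auto
  also have "\<dots> = (real s * e / 24) ^ 12"
    by (simp add: power_mult[symmetric])
  also have "\<dots> \<le> (1 + real q * e) ^ 12"
    using \<open>real s * e / 24 \<le> 1 + real q * e\<close> assms by (intro power_mono) auto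
  also have "\<dots> \<le> ((1 + e) ^ q) ^ 12"
    using Bernoulli_inequality[of e q] assms by (intro power_mono) auto
  also have "\<dots> \<le> (1 + e) ^ s"
    using assms unfolding q_def by (simp add: power_mult[symmetric] power_increasing)
  finally show ?thesis .
qed

lemma square_le_three_halves_power: "13 \<le> n \<Longrightarrow> (real n)\<^sup>2 \<le> (3/2) ^ n"
proof (induction n rule: nat_induct_at_least)
  case (Suc n)
  have "13 * real n \<le> real n * real n"
    using Suc.hyps by (intro mult_right_mono) auto
  moreover have "(real (Suc n))\<^sup>2 = real n * real n + 2 * real n + 1"
    "3/2 * (real n)\<^sup>2 = 3/2 * (real n * real n)"
    by (simp_all add: power2_eq_square algebra_simps)
  ultimately have "(real (Suc n))\<^sup>2 \<le> 3/2 * (real n)\<^sup>2"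
    using Suc.hyps by linarith
  also have "\<dots> \<le> (3/2) ^ Suc n"
    using Suc.IH by simp
  finally show ?case .
qed (simp add: power_divide)

lemma divide_less_of_less_mult:
  fixes t w c d :: real
  assumes "t < w * d" "0 \<le> t" "0 < w" "w \<le> c"
  shows "t / c < d"
proof -
  have "0 < w * d"
    using assms(1,2) by linarith
  then have "0 < d"
    using assms(3) by (simp add: zero_less_mult_iff)
  then have "t < c * d"
    using assms(1,4) mult_right_mono[of w c d] by linarith
  then show ?thesis
    using assms(3,4) by (simp add: pos_divide_less_eq mult.commute)
qed

lemma nat_ceiling_bounds: "0 \<le> x \<Longrightarrow> x \<le> real (nat \<lceil>x\<rceil>) \<and> real (nat \<lceil>x\<rceil>) \<le> x + 1"
  by (simp add: of_nat_nat)

lemma sum_mul_affine: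
  fixes y f :: "nat \<Rightarrow> real"
  shows "(\<Sum>j\<in>A. y j * (c * f j + d)) = c * (\<Sum>j\<in>A. y j * f j) + d * (\<Sum>j\<in>A. y j)"
  by (simp add: distrib_left sum.distrib sum_distrib_left mult_ac)

lemma cube_root_powr:
  fixes x :: real
  assumes "0 < x"
  shows "(x powr (1/3)) ^ 3 = x" "0 < x powr (1/3)"
    "x powr (-1/3) = 1 / x powr (1/3)" "x powr (-2) = 1 / (x powr (1/3)) ^ 6"
proof -
  show cube: "(x powr (1/3)) ^ 3 = x"
    using assms powr_power[of x "1/3" 3] by simp
  show "0 < x powr (1/3)"
    using assms by simp
  show "x powr (-1/3) = 1 / x powr (1/3)"
    by (simp add: powr_minus_divide flip: minus_divide_left)
  have "(x powr (1/3)) ^ 6 = ((x powr (1/3)) ^ 3)\<^sup>2"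
    by (simp flip: power_mult)
  then have "(x powr (1/3)) ^ 6 = x\<^sup>2"
    by (simp only: cube)
  then show "x powr (-2) = 1 / (x powr (1/3)) ^ 6"
    using assms by (simp add: powr_minus_divide)
qed

lemma ratio_chain_up:
  fixes f :: "nat \<Rightarrow> real"
  assumes "0 \<le> c" "\<And>j. k \<le> j \<Longrightarrow> j < k + i \<Longrightarrow> c * f j \<le> f (Suc j)"
  shows "c ^ i * f k \<le> f (k + i)"
  using assms(2)
proof (induction i)
  case (Suc i)
  then have "c ^ Suc i * f k \<le> c * f (k + i)"
    using assms(1) by (simp add: mult.assoc mult_left_mono)
  also have "\<dots> \<le> f (k + Suc i)"
    using Suc.prems[of "k + i"] by simp
  finally show ?case .
qed simp

lemma ratio_chain_down:
  fixes f :: "nat \<Rightarrow> real"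
  assumes "0 \<le> c" "\<And>j. k \<le> j \<Longrightarrow> j < k + i \<Longrightarrow> c * f (Suc j) \<le> f j"
  shows "c ^ i * f (k + i) \<le> f k"
  using assms(2)
proof (induction i)
  case (Suc i)
  have "c ^ Suc i * f (k + Suc i) = c ^ i * (c * f (Suc (k + i)))"
    by (simp add: mult_ac)
  also have "\<dots> \<le> c ^ i * f (k + i)"
    using Suc.prems[of "k + i"] assms(1) by (simp add: mult_left_mono)
  also have "\<dots> \<le> f k"
    using Suc by simp
  finally show ?case .
qed simp

section \<open>Binomial probabilities\<close>

text \<open>The binomial probabilities written out, so that their recurrences hold for every real parameter.\<close>
definition bpmf :: "nat \<Rightarrow> real \<Rightarrow> nat \<Rightarrow> real" where
  "bpmf N a k = real (N choose k) * a ^ k * (1 - a) ^ (N - k)"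

lemma pmf_binomial_eq_bpmf: "0 \<le> a \<Longrightarrow> a \<le> 1 \<Longrightarrow> pmf (binomial_pmf N a) k = bpmf N a k"
  by (simp add: bpmf_def)

lemma bpmf_nonneg: "0 \<le> a \<Longrightarrow> a \<le> 1 \<Longrightarrow> 0 \<le> bpmf N a k"
  by (simp add: bpmf_def)

lemma bpmf_le_1: "0 \<le> a \<Longrightarrow> a \<le> 1 \<Longrightarrow> bpmf N a k \<le> 1"
  by (metis pmf_binomial_eq_bpmf pmf_le_1)

lemma bpmf_eq_0: "N < k \<Longrightarrow> bpmf N a k = 0"
  by (simp add: bpmf_def)

lemma bpmf_nonzero_imp_le: "bpmf N a k \<noteq> 0 \<Longrightarrow> k \<le> N"
  using bpmf_eq_0 not_le by blast

lemma sum_bpmf: "(\<Sum>k\<le>N. bpmf N a k) = 1"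
proof -
  have "(\<Sum>k\<le>N. bpmf N a k) = (a + (1 - a)) ^ N"
    by (subst binomial_ring) (simp add: bpmf_def atLeast0AtMost)
  then show ?thesis by simp
qed

lemma sum_bpmf_le_1:
  assumes "finite A" "0 \<le> a" "a \<le> 1"
  shows "(\<Sum>k\<in>A. bpmf N a k) \<le> 1"
proof -
  have "(\<Sum>k\<in>A. bpmf N a k) = (\<Sum>k\<in>A \<inter> {..N}. bpmf N a k)"
    using assms(1) by (intro sum.mono_neutral_right) (auto dest: bpmf_nonzero_imp_le)
  also have "\<dots> \<le> (\<Sum>k\<le>N. bpmf N a k)"
    using assms by (intro sum_mono2) (auto simp: bpmf_nonneg)
  finally show ?thesis by (simp add: sum_bpmf)
qed

lemma sum_bpmf_from_eq: "(\<Sum>j\<in>{i..N}. bpmf N a j) = 1 - (\<Sum>j<i. bpmf N a j)"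
proof -
  have "(\<Sum>j<i. bpmf N a j) + (\<Sum>j\<in>{i..N}. bpmf N a j) = (\<Sum>j\<in>{..<i} \<union> {i..N}. bpmf N a j)"
    by (rule sum.union_disjoint[symmetric]) auto
  also have "\<dots> = (\<Sum>j\<le>N. bpmf N a j)"
    by (rule sum.mono_neutral_right) (auto simp: bpmf_eq_0)
  finally show ?thesis by (simp add: sum_bpmf)
qed

lemma bpmf_Suc_ratio:
  "bpmf N a (Suc j) * (real j + 1) * (1 - a) = bpmf N a j * (real N - real j) * a"
proof (cases "j < N")
  case True
  have choose: "real (N choose Suc j) * (real j + 1) = real (N choose j) * (real N - real j)"
  proof -
    have "real ((N choose Suc j) * Suc j) = real ((N choose j) * (N - j))"
      by (metis binomial_absorption binomial_absorb_comp mult.commute)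
    then show ?thesis using True by (simp add: of_nat_diff algebra_simps)
  qed
  have power: "(1 - a) ^ (N - j) = (1 - a) * (1 - a) ^ (N - Suc j)"
    using True by (metis Suc_diff_Suc power_Suc)
  have "bpmf N a (Suc j) * (real j + 1) * (1 - a)
      = (real (N choose Suc j) * (real j + 1)) * (a * a ^ j) * ((1 - a) * (1 - a) ^ (N - Suc j))"
    unfolding bpmf_def by (simp only: power_Suc mult_ac)
  also have "\<dots> = (real (N choose j) * (real N - real j)) * (a * a ^ j) * (1 - a) ^ (N - j)"
    by (simp only: choose power)
  finally show ?thesis
    unfolding bpmf_def by (simp only: mult_ac)
next
  case False
  then show ?thesis by (cases "j = N") (auto simp: bpmf_def binomial_eq_0)
qed

lemma bpmf_Suc_0: "bpmf (Suc N) a 0 = (1 - a) * bpmf N a 0"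
  by (simp add: bpmf_def)

lemma bpmf_Suc_Suc: "bpmf (Suc N) a (Suc k) = a * bpmf N a k + (1 - a) * bpmf N a (Suc k)"
proof (cases "Suc k \<le> N")
  case True
  have power: "(1 - a) ^ (N - k) = (1 - a) * (1 - a) ^ (N - Suc k)"
    using True by (metis Suc_diff_Suc Suc_le_lessD power_Suc)
  have "bpmf (Suc N) a (Suc k) = real (N choose k) * a ^ Suc k * (1 - a) ^ (N - k)
      + real (N choose Suc k) * a ^ Suc k * (1 - a) ^ (N - k)"
    by (simp add: bpmf_def algebra_simps)
  then show ?thesis
    unfolding bpmf_def power by (simp add: algebra_simps)
next
  case False
  then show ?thesis by (auto simp: bpmf_def binomial_eq_0)
qed

lemma sum_bpmf_Suc_atMost:
  "(\<Sum>i\<le>j. bpmf (Suc N) a i) = (\<Sum>i\<le>j. bpmf N a i) - a * bpmf N a j"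
  by (induction j) (simp_all add: bpmf_Suc_0 bpmf_Suc_Suc algebra_simps)

lemma sum_bpmf_Suc_from:
  fixes a :: real
  shows "(\<Sum>j\<in>{Suc i..Suc N}. bpmf (Suc N) a j) = (\<Sum>j\<in>{Suc i..N}. bpmf N a j) + a * bpmf N a i"
  using sum_bpmf_from_eq[where i = "Suc i" and N = "Suc N" and a = a]
    sum_bpmf_from_eq[where i = "Suc i" and N = N and a = a]
    sum_bpmf_Suc_atMost[where j = i and N = N and a = a]
  by (simp add: lessThan_Suc_atMost)

lemma bpmf_step_up:
  assumes "0 \<le> a" "a < 1" "c * (real j + 1) * (1 - a) \<le> (real N - real j) * a"
  shows "c * bpmf N a j \<le> bpmf N a (Suc j)"
proof -
  have "(c * bpmf N a j) * ((real j + 1) * (1 - a)) = bpmf N a j * (c * (real j + 1) * (1 - a))"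
    by (simp add: mult_ac)
  also have "\<dots> \<le> bpmf N a j * ((real N - real j) * a)"
    using assms by (intro mult_left_mono) (auto simp: bpmf_nonneg)
  also have "\<dots> = bpmf N a (Suc j) * ((real j + 1) * (1 - a))"
    using bpmf_Suc_ratio[of N a j] by (simp add: mult_ac)
  finally show ?thesis
    using assms by (simp add: mult_le_cancel_right)
qed

lemma bpmf_step_down:
  assumes "0 \<le> a" "a < 1" "c * (real N - real j) * a \<le> (real j + 1) * (1 - a)"
  shows "c * bpmf N a (Suc j) \<le> bpmf N a j"
proof -
  have "(c * bpmf N a (Suc j)) * ((real j + 1) * (1 - a)) = bpmf N a j * (c * (real N - real j) * a)"
    using bpmf_Suc_ratio[of N a j] by (simp add: mult_ac)
  also have "\<dots> \<le> bpmf N a j * ((real j + 1) * (1 - a))"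
    using assms by (intro mult_left_mono) (auto simp: bpmf_nonneg)
  finally show ?thesis
    using assms by (simp add: mult_le_cancel_right)
qed

lemma mul_bpmf_le_bpmf_Suc:
  assumes "0 \<le> b" "b < 1" "0 \<le> c" "c * (real k + 1) \<le> real N - real k"
  shows "c * (b * bpmf N b k) \<le> bpmf N b (Suc k)"
proof -
  have "c * (real k + 1) * (1 - b) \<le> c * (real k + 1)"
    using assms by (simp add: mult_left_le)
  then have "c * (real k + 1) * (1 - b) * b \<le> (real N - real k) * b"
    using assms by (intro mult_right_mono) auto
  then have "(c * b) * bpmf N b k \<le> bpmf N b (Suc k)"
    using assms by (intro bpmf_step_up) (auto simp: mult_ac)
  then show ?thesis
    by (simp add: mult_ac)
qed

section \<open>Local bounds for binomial probabilities\<close>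

text \<open>
  The ratio condition is the one-step ratio bound at the far end of the window; by monotonicity of
  the ratio it holds along the whole window, and \<open>(L/(L+1))^L \<ge> 1/3\<close>.
\<close>
lemma bpmf_lower_window:
  assumes "0 \<le> a" "a < 1" "1 \<le> L" "L \<le> k"
    and ratio: "real L * (real N - real (k - L)) * a \<le> (real L + 1) * (real (k - L) + 1) * (1 - a)"
  shows "(real L + 1) * bpmf N a k \<le> 3 * (\<Sum>i\<le>k. bpmf N a i)"
proof -
  define c where "c = real L / (real L + 1)"
  have c: "0 \<le> c" "c \<le> 1" "1 / 3 \<le> c ^ L"
    unfolding c_def using assms(3) one_third_le_power_ratio by auto
  have step: "c * bpmf N a (Suc j) \<le> bpmf N a j" if "k - L \<le> j" for j
  proof (rule bpmf_step_down[OF assms(1,2)])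
    have "real L * (real N - real j) * a \<le> real L * (real N - real (k - L)) * a"
      using that assms(1) by (intro mult_right_mono mult_left_mono) auto
    also have "\<dots> \<le> (real L + 1) * (real (k - L) + 1) * (1 - a)"
      by (rule ratio)
    also have "\<dots> \<le> (real L + 1) * (real j + 1) * (1 - a)"
      using that assms(2) by (intro mult_right_mono mult_left_mono) auto
    finally show "c * (real N - real j) * a \<le> (real j + 1) * (1 - a)"
      unfolding c_def by (simp add: field_simps)
  qed
  have each: "bpmf N a k / 3 \<le> bpmf N a j" if "j \<in> {k - L..k}" for j
  proof -
    have "c ^ (k - j) * bpmf N a (j + (k - j)) \<le> bpmf N a j"
      using that c(1) by (intro ratio_chain_down step) auto
    moreover have "c ^ L \<le> c ^ (k - j)"
      using that c by (intro power_decreasing) auto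
    then have "1 / 3 * bpmf N a k \<le> c ^ (k - j) * bpmf N a k"
      using c assms(1,2) by (intro mult_right_mono) (auto simp: bpmf_nonneg)
    ultimately show ?thesis
      using that by simp
  qed
  have "(real L + 1) * (bpmf N a k / 3) = (\<Sum>j\<in>{k - L..k}. bpmf N a k / 3)"
    using assms(4) by simp
  also have "\<dots> \<le> (\<Sum>j\<in>{k - L..k}. bpmf N a j)"
    by (rule sum_mono) (rule each)
  also have "\<dots> \<le> (\<Sum>i\<le>k. bpmf N a i)"
    using assms(1,2) by (intro sum_mono2) (auto simp: bpmf_nonneg)
  finally show ?thesis
    by simp
qed

lemma bpmf_upper_window:
  assumes "0 \<le> b" "b < 1" "1 \<le> L"
    and ratio: "real L * (real k + real L) * (1 - b) \<le> (real L + 1) * (real N + 1 - real k - real L) * b"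
  shows "real L * bpmf N b k \<le> 3 * (\<Sum>j\<in>{Suc k..N}. bpmf N b j)"
proof -
  define c where "c = real L / (real L + 1)"
  have c: "0 \<le> c" "c \<le> 1" "1 / 3 \<le> c ^ L"
    unfolding c_def using assms(3) one_third_le_power_ratio by auto
  have step: "c * bpmf N b j \<le> bpmf N b (Suc j)" if "j < k + L" for j
  proof (rule bpmf_step_up[OF assms(1,2)])
    have "real L * (real j + 1) * (1 - b) \<le> real L * (real k + real L) * (1 - b)"
      using that assms(2) by (intro mult_right_mono mult_left_mono) auto
    also have "\<dots> \<le> (real L + 1) * (real N + 1 - real k - real L) * b"
      by (rule ratio)
    also have "\<dots> \<le> (real L + 1) * (real N - real j) * b"
      using that assms(1) by (intro mult_right_mono mult_left_mono) auto
    finally show "c * (real j + 1) * (1 - b) \<le> (real N - real j) * b"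
      unfolding c_def by (simp add: field_simps)
  qed
  have each: "bpmf N b k / 3 \<le> bpmf N b j" if "j \<in> {Suc k..k + L}" for j
  proof -
    have "c ^ (j - k) * bpmf N b k \<le> bpmf N b (k + (j - k))"
      using that c(1) by (intro ratio_chain_up step) auto
    moreover have "c ^ L \<le> c ^ (j - k)"
      using that c by (intro power_decreasing) auto
    then have "1 / 3 * bpmf N b k \<le> c ^ (j - k) * bpmf N b k"
      using c assms(1,2) by (intro mult_right_mono) (auto simp: bpmf_nonneg)
    ultimately show ?thesis
      using that by simp
  qed
  have "real L * (bpmf N b k / 3) = (\<Sum>j\<in>{Suc k..k + L}. bpmf N b k / 3)"
    by simp
  also have "\<dots> \<le> (\<Sum>j\<in>{Suc k..k + L}. bpmf N b j)"
    by (rule sum_mono) (rule each)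
  also have "\<dots> = (\<Sum>j\<in>{Suc k..k + L} \<inter> {..N}. bpmf N b j)"
    by (intro sum.mono_neutral_right) (auto simp: bpmf_eq_0)
  also have "\<dots> \<le> (\<Sum>j\<in>{Suc k..N}. bpmf N b j)"
    using assms(1,2) by (intro sum_mono2) (auto simp: bpmf_nonneg)
  finally show ?thesis
    by simp
qed

lemma bpmf_lower_tail:
  assumes "0 \<le> a" "a < 1" "0 \<le> e"
    and far: "real k + real s + e * ((real N + 1) * a) \<le> (real N + 1) * a"
  shows "(1 + e) ^ s * bpmf N a k \<le> 1"
proof -
  have "(1 + e) ^ s * bpmf N a k \<le> bpmf N a (k + s)"
  proof (rule ratio_chain_up)
    fix j assume "k \<le> j" "j < k + s"
    then have j: "real j + 1 + e * ((real N + 1) * a) \<le> (real N + 1) * a"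
      using far by linarith
    have "(real j + 1) * (1 - a) \<le> real j + 1"
      using assms by (simp add: mult_left_le)
    moreover have "0 \<le> e * ((real N + 1) * a)"
      using assms by simp
    ultimately have "e * ((real j + 1) * (1 - a)) \<le> e * ((real N + 1) * a)"
      using j assms(3) by (intro mult_left_mono) linarith+
    then have "(1 + e) * (real j + 1) * (1 - a) \<le> (real N - real j) * a"
      using j by (simp add: algebra_simps)
    then show "(1 + e) * bpmf N a j \<le> bpmf N a (Suc j)"
      using assms by (intro bpmf_step_up) auto
  qed (use assms in simp)
  also have "\<dots> \<le> 1"
    using assms by (simp add: bpmf_le_1)
  finally show ?thesis .
qed

lemma bpmf_upper_tail:
  assumes "0 \<le> b" "b < 1" "0 \<le> e" "s \<le> k"
    and far: "(real N + 1) * b + e * ((real N + 1) * b) + real s \<le> real k + 1"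
  shows "(1 + e) ^ s * bpmf N b k \<le> 1"
proof -
  have "(1 + e) ^ s * bpmf N b (k - s + s) \<le> bpmf N b (k - s)"
  proof (rule ratio_chain_down)
    fix j assume "k - s \<le> j" "j < k - s + s"
    then have j: "(real N + 1) * b + e * ((real N + 1) * b) \<le> real j + 1"
      using far assms(4) by (simp add: of_nat_diff)
    have "e * ((real N - real j) * b) \<le> e * ((real N + 1) * b)"
      using assms by (intro mult_left_mono mult_right_mono) auto
    then have "(1 + e) * (real N - real j) * b \<le> (real j + 1) * (1 - b)"
      using j by (simp add: algebra_simps)
    then show "(1 + e) * bpmf N b (Suc j) \<le> bpmf N b j"
      using assms by (intro bpmf_step_down) auto
  qed (use assms in simp)
  also have "\<dots> \<le> 1"
    using assms by (simp add: bpmf_le_1)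
  finally show ?thesis
    using assms by simp
qed

text \<open>
  The exponent and base arise from walking \<open>v^2/396\<close> steps away from a point at distance
  \<open>v^2/198\<close> from the mean \<open>t\<close> of a binomial law with \<open>t \<le> v^3\<close> trials.
\<close>
lemma le_inverse_sixth_power_of_geometric:
  fixes x t v :: real
  assumes "0 \<le> x" "0 < t" "t \<le> v ^ 3" "10 ^ 14 \<le> v"
    and geometric: "(1 + v\<^sup>2 / (396 * t)) ^ nat \<lfloor>v\<^sup>2 / 396\<rfloor> * x \<le> 1"
  shows "x \<le> 1 / v ^ 6"
proof -
  define s where "s = nat \<lfloor>v\<^sup>2 / 396\<rfloor>"
  define e where "e = v\<^sup>2 / (396 * t)"
  have v: "0 < v" "10 ^ 14 * v \<le> v\<^sup>2" "10 ^ 28 \<le> v\<^sup>2"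
    using assms(4) power_mono[OF assms(4), of 2] by (auto simp: power2_eq_square)
  have "v\<^sup>2 / 396 - 1 \<le> real s"
    unfolding s_def by (simp add: of_nat_nat)
  then have s: "v\<^sup>2 / 792 \<le> real s"
    using v assms(4) by simp
  have "1 / (396 * v) \<le> e"
  proof -
    have "v\<^sup>2 / (396 * v ^ 3) \<le> e"
      unfolding e_def using assms v by (intro divide_left_mono) auto
    then show ?thesis
      using v by (simp add: power2_eq_square power3_eq_cube)
  qed
  then have "v\<^sup>2 / 792 * (1 / (396 * v)) \<le> real s * e"
    using s v by (intro mult_mono) auto
  then have "v / 7527168 \<le> real s * e / 24"
    using v by (simp add: power2_eq_square)
  then have "(v / 7527168)\<^sup>2 \<le> (real s * e / 24)\<^sup>2"
    using v by (intro power_mono) auto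
  moreover have "v \<le> (v / 7527168)\<^sup>2"
    using v by (simp add: power2_eq_square)
  ultimately have "v \<le> (real s * e / 24)\<^sup>2"
    by linarith
  moreover have "24 * 792 \<le> v\<^sup>2"
    using v(3) by simp
  then have "24 \<le> s"
    using s by linarith
  moreover have "0 < e"
    using v assms(2) unfolding e_def by simp
  ultimately have "v ^ 6 \<le> (1 + e) ^ s"
    using v by (intro sixth_power_le_one_plus_power) auto
  then have "v ^ 6 * x \<le> 1"
    using geometric assms(1) unfolding s_def e_def by (meson mult_right_mono order.trans)
  then show ?thesis
    using v by (simp add: field_simps)
qed

lemma bpmf_far_below_mean:
  assumes "0 \<le> a" "a < 1" "v ^ 3 = real N + 1" "10 ^ 14 \<le> v"
    and far: "real k + v\<^sup>2 / 198 \<le> (real N + 1) * a"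
  shows "bpmf N a k \<le> 1 / v ^ 6"
proof -
  define t where "t = (real N + 1) * a"
  define s where "s = nat \<lfloor>v\<^sup>2 / 396\<rfloor>"
  define e where "e = v\<^sup>2 / (396 * t)"
  have "0 < v\<^sup>2 / 198"
    using assms(4) by simp
  then have t: "0 < t" "t \<le> v ^ 3"
    using assms of_nat_0_le_iff[of k] unfolding t_def by (linarith, simp add: mult_left_le)
  have "real s \<le> v\<^sup>2 / 396"
    unfolding s_def by (rule of_nat_floor) simp
  moreover have "e * t = v\<^sup>2 / 396"
    using t unfolding e_def by simp
  ultimately have "real k + real s + e * ((real N + 1) * a) \<le> (real N + 1) * a"
    using far unfolding t_def by linarith
  moreover have "0 \<le> e"
    using t unfolding e_def by simp
  ultimately have "(1 + e) ^ s * bpmf N a k \<le> 1"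
    using assms(1,2) by (intro bpmf_lower_tail)
  moreover have "0 \<le> bpmf N a k"
    using assms by (simp add: bpmf_nonneg)
  ultimately show ?thesis
    unfolding s_def e_def using le_inverse_sixth_power_of_geometric t assms(4) by blast
qed

lemma bpmf_far_above_mean:
  assumes "0 \<le> b" "b < 1" "v ^ 3 = real N + 1" "10 ^ 14 \<le> v"
    and far: "(real N + 1) * b + v\<^sup>2 / 198 \<le> real k"
  shows "bpmf N b k \<le> 1 / v ^ 6"
proof (cases "b = 0")
  case True
  have "0 < v\<^sup>2 / 198"
    using assms(4) by simp
  moreover have "v\<^sup>2 / 198 \<le> real k"
    using far True by simp
  ultimately have "k \<noteq> 0"
    by linarith
  then show ?thesis
    using True assms(4) by (simp add: bpmf_def zero_power)
next
  case False
  define t where "t = (real N + 1) * b"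
  define s where "s = nat \<lfloor>v\<^sup>2 / 396\<rfloor>"
  define e where "e = v\<^sup>2 / (396 * t)"
  have t: "0 < t" "t \<le> v ^ 3"
    using assms False unfolding t_def by (auto simp: mult_left_le)
  have "real s \<le> v\<^sup>2 / 396"
    unfolding s_def by (rule of_nat_floor) simp
  moreover have "e * t = v\<^sup>2 / 396"
    using t unfolding e_def by simp
  ultimately have "(real N + 1) * b + e * ((real N + 1) * b) + real s \<le> real k + 1"
    and "s \<le> k"
    using far t unfolding t_def by linarith+
  moreover have "0 \<le> e"
    using t unfolding e_def by simp
  ultimately have "(1 + e) ^ s * bpmf N b k \<le> 1"
    using assms(1,2) by (intro bpmf_upper_tail)
  moreover have "0 \<le> bpmf N b k"
    using assms by (simp add: bpmf_nonneg)
  ultimately show ?thesis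
    unfolding s_def e_def using le_inverse_sixth_power_of_geometric t assms(4) by blast
qed

lemma far_below_mean_of_not_lower_window:
  assumes "0 \<le> a" "a \<le> 2/3" "v ^ 3 = real N + 1" "10 ^ 14 \<le> v" "1/16 \<le> a * v"
    and L: "a * v \<le> real L" "real L \<le> a * v + 1"
    and not_window: "\<not> (L \<le> k \<and>
      real L * (real N - real (k - L)) * a \<le> (real L + 1) * (real (k - L) + 1) * (1 - a))"
  shows "real k + v\<^sup>2 / 198 \<le> (real N + 1) * a"
proof -
  define M where "M = real N + 1"
  have Ma: "M * a = v\<^sup>2 * (a * v)"
    using assms(3) unfolding M_def by (simp add: power2_eq_square power3_eq_cube)
  have "10 ^ 14 * v \<le> v\<^sup>2"
    using assms(4) by (simp add: power2_eq_square mult_right_mono)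
  then have v: "0 < v" "a * v \<le> v" "v + 1 \<le> v\<^sup>2 / 198 / 16"
    using assms(1,2,4) by (auto simp: mult_left_le_one_le)
  have "real k + 1 - real L + v\<^sup>2 / 99 \<le> M * a"
  proof (cases "L \<le> k")
    case True
    define j where "j = real k + 1 - real L"
    have "real (k - L) = j - 1"
      using True unfolding j_def by (simp add: of_nat_diff)
    then have "(real L + 1) * j * (1 - a) < real L * (real N - (j - 1)) * a"
      using True not_window by simp
    then have "(1 - a) * (M * a) < (real L + 1 - a) * (M * a - j)"
      unfolding M_def by (simp add: algebra_simps)
    moreover have "1 / 3 * (M * a) \<le> (1 - a) * (M * a)"
      using assms(1,2) unfolding M_def by (intro mult_right_mono) auto
    ultimately have "v\<^sup>2 * (a * v) / 3 < (real L + 1 - a) * (M * a - j)"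
      unfolding Ma by simp
    then have "v\<^sup>2 * (a * v) / 3 / (33 * (a * v)) < M * a - j"
      by (rule divide_less_of_less_mult) (use assms(1,2,5) L v in auto)
    moreover have "a \<noteq> 0" "v \<noteq> 0"
      using assms(5) by auto
    then have "v\<^sup>2 * (a * v) / 3 / (33 * (a * v)) = v\<^sup>2 / 99"
      by (simp add: field_simps)
    ultimately show ?thesis
      unfolding j_def by linarith
  next
    case False
    have "v\<^sup>2 * (1/16) \<le> M * a"
      unfolding Ma using assms(5) by (intro mult_left_mono) auto
    then show ?thesis
      using False L v by simp
  qed
  then show ?thesis
    unfolding M_def using L v by linarith
qed

lemma far_above_mean_of_not_upper_window:
  assumes "0 \<le> b" "b \<le> 2/3" "v ^ 3 = real N + 1" "10 ^ 14 \<le> v" "1/16 \<le> b * v"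
    and L: "b * v \<le> real L" "real L \<le> b * v + 1"
    and not_window:
      "\<not> real L * (real k + real L) * (1 - b) \<le> (real L + 1) * (real N + 1 - real k - real L) * b"
  shows "(real N + 1) * b + v\<^sup>2 / 198 \<le> real k"
proof -
  define M where "M = real N + 1"
  define j where "j = real k + real L"
  have Mb: "M * b = v\<^sup>2 * (b * v)"
    using assms(3) unfolding M_def by (simp add: power2_eq_square power3_eq_cube)
  have "10 ^ 14 * v \<le> v\<^sup>2"
    using assms(4) by (simp add: power2_eq_square mult_right_mono)
  then have v: "0 < v" "b * v \<le> v" "v + 1 \<le> v\<^sup>2 / 198"
    using assms(1,2,4) by (auto simp: mult_left_le_one_le)
  have "(1 - b) * (M * b) < (real L + b) * (j - M * b)"
    using not_window unfolding M_def j_def by (simp add: algebra_simps)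
  moreover have "1 / 3 * (M * b) \<le> (1 - b) * (M * b)"
    using assms(1,2) unfolding M_def by (intro mult_right_mono) auto
  ultimately have "v\<^sup>2 * (b * v) / 3 < (real L + b) * (j - M * b)"
    unfolding Mb by simp
  then have "v\<^sup>2 * (b * v) / 3 / (33 * (b * v)) < j - M * b"
    by (rule divide_less_of_less_mult) (use assms(1,2,5) L v in auto)
  moreover have "b \<noteq> 0" "v \<noteq> 0"
    using assms(5) by auto
  then have "v\<^sup>2 * (b * v) / 3 / (33 * (b * v)) = v\<^sup>2 / 99"
    by (simp add: field_simps)
  ultimately show ?thesis
    unfolding M_def j_def using L v by linarith
qed

lemma far_above_mean_of_few_successors:
  assumes "0 \<le> b" "v ^ 3 = real N + 1" "10 ^ 14 \<le> v" "b * v < 1/16"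
    and few: "real N - real k < (real k + 1) * v"
  shows "(real N + 1) * b + v\<^sup>2 / 198 \<le> real k"
proof -
  have "10 ^ 14 * v \<le> v\<^sup>2"
    using assms(3) by (simp add: power2_eq_square mult_right_mono)
  then have v: "0 < v" "4 * v + 4 \<le> v\<^sup>2"
    using assms(3) by auto
  have "v * (4 * v + 4) \<le> v * v\<^sup>2"
    using v by (intro mult_left_mono) auto
  then have "4 * v\<^sup>2 + 4 * v \<le> v ^ 3"
    by (simp add: algebra_simps power2_eq_square power3_eq_cube)
  moreover have "(v\<^sup>2 / 2 + 1) * (v + 1) = v ^ 3 / 2 + v\<^sup>2 / 2 + v + 1"
    by (simp add: algebra_simps power2_eq_square power3_eq_cube)
  ultimately have "(v\<^sup>2 / 2 + 1) * (v + 1) \<le> v ^ 3"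
    using v by linarith
  also have "\<dots> < (real k + 1) * (v + 1)"
    using few assms(2) by (simp add: algebra_simps)
  finally have "v\<^sup>2 / 2 \<le> real k"
    using v by (simp add: mult_less_cancel_right)
  moreover have "(real N + 1) * b \<le> v\<^sup>2 / 16"
  proof -
    have "(real N + 1) * b = v\<^sup>2 * (b * v)"
      using assms(2) by (simp add: power2_eq_square power3_eq_cube)
    also have "\<dots> \<le> v\<^sup>2 * (1/16)"
      using assms(4) by (intro mult_left_mono) auto
    finally show ?thesis
      by simp
  qed
  ultimately show ?thesis
    by simp
qed

lemma mul_bpmf_le_cdf_of_large_mean:
  assumes "0 \<le> a" "a \<le> 2/3" "v ^ 3 = real N + 1" "10 ^ 14 \<le> v" "1/16 \<le> a * v"
  shows "a * bpmf N a k \<le> 3 / v * (\<Sum>i\<le>k. bpmf N a i) + 1 / v ^ 6"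
proof -
  define F where "F = (\<Sum>i\<le>k. bpmf N a i)"
  define L where "L = nat \<lceil>a * v\<rceil>"
  have L: "a * v \<le> real L" "real L \<le> a * v + 1"
    using nat_ceiling_bounds[of "a * v"] assms unfolding L_def by auto
  then have "1 \<le> L"
    using assms(5) by simp
  have "0 \<le> F"
    using assms unfolding F_def by (auto intro: sum_nonneg simp: bpmf_nonneg)
  then have b: "0 \<le> bpmf N a k" "a * bpmf N a k \<le> bpmf N a k" "0 \<le> 3 / v * F" "0 \<le> 1 / v ^ 6"
    using assms by (auto simp: bpmf_nonneg mult_left_le_one_le)
  have "a * bpmf N a k \<le> 3 / v * F + 1 / v ^ 6"
  proof (cases "L \<le> k \<and>
      real L * (real N - real (k - L)) * a \<le> (real L + 1) * (real (k - L) + 1) * (1 - a)")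
    case True
    then have "(real L + 1) * bpmf N a k \<le> 3 * F"
      unfolding F_def using assms \<open>1 \<le> L\<close> by (intro bpmf_lower_window) auto
    moreover have "a * v * bpmf N a k \<le> (real L + 1) * bpmf N a k"
      using L b by (intro mult_right_mono) auto
    ultimately have "a * bpmf N a k \<le> 3 / v * F"
      using assms(4) by (simp add: field_simps mult_ac)
    then show ?thesis
      using b by linarith
  next
    case False
    then have "bpmf N a k \<le> 1 / v ^ 6"
      using assms L by (intro bpmf_far_below_mean far_below_mean_of_not_lower_window) auto
    then show ?thesis
      using b by linarith
  qed
  then show ?thesis
    unfolding F_def .
qed

text \<open>The constant \<open>10^56 = (10^14)^4\<close> absorbs the trivial bounds used when \<open>v < 10^14\<close>.\<close>
lemma mul_bpmf_le_cdf:
  assumes "0 \<le> a" "a \<le> 2/3" "v ^ 3 = real N + 1" "0 < v"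
  shows "a * bpmf N a k \<le> 10 ^ 56 / v * (\<Sum>i\<le>k. bpmf N a i) + 1 / v ^ 6"
proof (cases "a * v \<le> 10 ^ 56")
  case True
  have "bpmf N a k \<le> (\<Sum>i\<le>k. bpmf N a i)"
    using assms by (intro member_le_sum) (auto simp: bpmf_nonneg)
  then have "a * v * bpmf N a k \<le> 10 ^ 56 * (\<Sum>i\<le>k. bpmf N a i)"
    using True assms by (intro mult_mono) (auto simp: bpmf_nonneg)
  then have "a * bpmf N a k \<le> 10 ^ 56 / v * (\<Sum>i\<le>k. bpmf N a i)"
    using assms(4) by (simp add: field_simps)
  moreover have "0 \<le> 1 / v ^ 6"
    using assms(4) by simp
  ultimately show ?thesis
    by linarith
next
  case False
  have "a * v \<le> v"
    using assms by (simp add: mult_left_le_one_le)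
  then have "10 ^ 14 \<le> v" "1/16 \<le> a * v"
    using False by simp_all
  then have "a * bpmf N a k \<le> 3 / v * (\<Sum>i\<le>k. bpmf N a i) + 1 / v ^ 6"
    using assms by (intro mul_bpmf_le_cdf_of_large_mean) auto
  moreover have "3 / v * (\<Sum>i\<le>k. bpmf N a i) \<le> 10 ^ 56 / v * (\<Sum>i\<le>k. bpmf N a i)"
    using assms by (intro mult_right_mono divide_right_mono) (auto simp: bpmf_nonneg sum_nonneg)
  ultimately show ?thesis
    by linarith
qed

lemma mul_bpmf_le_tail_crude:
  assumes "0 \<le> b" "b < 1" "k < N"
  shows "b * bpmf N b k \<le> (real N + 1) * (\<Sum>j\<in>{Suc k..N}. bpmf N b j)"
proof -
  have "1 / (real N + 1) * (real k + 1) \<le> 1" "1 \<le> real N - real k"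
    using assms(3) by simp_all
  then have "1 / (real N + 1) * (real k + 1) \<le> real N - real k"
    by linarith
  then have "1 / (real N + 1) * (b * bpmf N b k) \<le> bpmf N b (Suc k)"
    using assms(1,2) by (intro mul_bpmf_le_bpmf_Suc) auto
  also have "\<dots> \<le> (\<Sum>j\<in>{Suc k..N}. bpmf N b j)"
    using assms by (intro member_le_sum) (auto simp: bpmf_nonneg)
  finally show ?thesis
    by (simp add: field_simps)
qed

lemma mul_bpmf_le_tail_of_small_mean:
  assumes "0 \<le> b" "b < 1" "v ^ 3 = real N + 1" "10 ^ 14 \<le> v" "b * v < 1/16"
  shows "b * bpmf N b k \<le> 1 / v * (\<Sum>j\<in>{Suc k..N}. bpmf N b j) + 1 / v ^ 6"
proof (cases "v * (real k + 1) \<le> real N - real k")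
  case True
  have "0 < v * (real k + 1)"
    using assms(4) by simp
  then have "k < N"
    using True by linarith
  have "v * (b * bpmf N b k) \<le> bpmf N b (Suc k)"
    using True assms by (intro mul_bpmf_le_bpmf_Suc) auto
  also have "\<dots> \<le> (\<Sum>j\<in>{Suc k..N}. bpmf N b j)"
    using \<open>k < N\<close> assms by (intro member_le_sum) (auto simp: bpmf_nonneg)
  finally have "b * bpmf N b k \<le> 1 / v * (\<Sum>j\<in>{Suc k..N}. bpmf N b j)"
    using assms(4) by (simp add: field_simps)
  moreover have "0 \<le> 1 / v ^ 6"
    using assms(4) by simp
  ultimately show ?thesis
    by linarith
next
  case False
  then have "bpmf N b k \<le> 1 / v ^ 6"
    using assms by (intro bpmf_far_above_mean far_above_mean_of_few_successors) (auto simp: mult_ac)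
  moreover have "b * bpmf N b k \<le> bpmf N b k" "0 \<le> 1 / v * (\<Sum>j\<in>{Suc k..N}. bpmf N b j)"
    using assms by (auto simp: mult_left_le_one_le bpmf_nonneg sum_nonneg)
  ultimately show ?thesis
    by linarith
qed

lemma mul_bpmf_le_tail_of_large_mean:
  assumes "0 \<le> b" "b \<le> 2/3" "v ^ 3 = real N + 1" "10 ^ 14 \<le> v" "1/16 \<le> b * v"
  shows "b * bpmf N b k \<le> 3 / v * (\<Sum>j\<in>{Suc k..N}. bpmf N b j) + 1 / v ^ 6"
proof -
  define G where "G = (\<Sum>j\<in>{Suc k..N}. bpmf N b j)"
  define L where "L = nat \<lceil>b * v\<rceil>"
  have L: "b * v \<le> real L" "real L \<le> b * v + 1"
    using nat_ceiling_bounds[of "b * v"] assms unfolding L_def by auto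
  then have "1 \<le> L"
    using assms(5) by simp
  have b: "0 \<le> bpmf N b k" "0 \<le> G" "b * bpmf N b k \<le> bpmf N b k"
    using assms unfolding G_def by (auto intro: sum_nonneg simp: bpmf_nonneg mult_left_le_one_le)
  have "0 \<le> 3 / v * G" "0 \<le> 1 / v ^ 6"
    using assms(4) b by auto
  show ?thesis
  proof (cases "real L * (real k + real L) * (1 - b) \<le> (real L + 1) * (real N + 1 - real k - real L) * b")
    case True
    then have "real L * bpmf N b k \<le> 3 * G"
      unfolding G_def using assms \<open>1 \<le> L\<close> by (intro bpmf_upper_window) auto
    moreover have "b * v * bpmf N b k \<le> real L * bpmf N b k"
      using L b by (intro mult_right_mono) auto
    ultimately have "b * bpmf N b k \<le> 3 / v * G"
      using assms(4) by (simp add: field_simps mult_ac)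
    with \<open>0 \<le> 1 / v ^ 6\<close> show ?thesis
      unfolding G_def by linarith
  next
    case False
    then have "bpmf N b k \<le> 1 / v ^ 6"
      using assms L by (intro bpmf_far_above_mean far_above_mean_of_not_upper_window) auto
    then show ?thesis
      using b \<open>0 \<le> 3 / v * G\<close> unfolding G_def by linarith
  qed
qed

lemma mul_bpmf_le_tail:
  assumes "0 \<le> b" "b \<le> 2/3" "v ^ 3 = real N + 1" "0 < v" "k < N"
  shows "b * bpmf N b k \<le> 10 ^ 56 / v * (\<Sum>j\<in>{Suc k..N}. bpmf N b j) + 1 / v ^ 6"
proof -
  define G where "G = (\<Sum>j\<in>{Suc k..N}. bpmf N b j)"
  have "0 \<le> G"
    using assms unfolding G_def by (auto intro: sum_nonneg simp: bpmf_nonneg)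
  then have G: "1 / v * G \<le> 10 ^ 56 / v * G" "3 / v * G \<le> 10 ^ 56 / v * G" "0 \<le> 1 / v ^ 6"
    using assms(4) by (auto intro!: mult_right_mono divide_right_mono)
  consider "v < 10 ^ 14" | "10 ^ 14 \<le> v" "b * v < 1/16" | "10 ^ 14 \<le> v" "1/16 \<le> b * v"
    by linarith
  then have "b * bpmf N b k \<le> 10 ^ 56 / v * G + 1 / v ^ 6"
  proof cases
    case 1
    have "v * v ^ 3 \<le> 10 ^ 56"
      using 1 assms(4) power_strict_mono[of v "10 ^ 14" 4] by (simp add: eval_nat_numeral)
    then have "v ^ 3 * G \<le> 10 ^ 56 / v * G"
      using \<open>0 \<le> G\<close> assms(4) by (intro mult_right_mono) (auto simp: field_simps)
    moreover have "b * bpmf N b k \<le> v ^ 3 * G"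
      using mul_bpmf_le_tail_crude[of b k N] assms unfolding G_def by simp
    ultimately show ?thesis
      using G by linarith
  next
    case 2
    then show ?thesis
      using mul_bpmf_le_tail_of_small_mean[of b v N k] assms G unfolding G_def by simp
  next
    case 3
    then show ?thesis
      using mul_bpmf_le_tail_of_large_mean[of b v N k] assms G unfolding G_def by simp
  qed
  then show ?thesis
    unfolding G_def .
qed

lemma power_le_inverse_square:
  fixes b :: real
  assumes "0 \<le> b" "b \<le> 2/3" "13 \<le> n"
  shows "b ^ n \<le> 1 / (real n)\<^sup>2"
proof -
  have "b ^ n \<le> (2/3) ^ n"
    using assms by (intro power_mono) auto
  also have "\<dots> = 1 / (3/2) ^ n"
    by (simp add: power_divide)
  also have "\<dots> \<le> 1 / (real n)\<^sup>2"
    using assms(3) square_le_three_halves_power by (intro divide_left_mono) auto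
  finally show ?thesis .
qed

lemma bpmf_le_inverse_square:
  assumes "0 \<le> a" "a < 1"
    and increasing: "\<And>j. n \<le> j \<Longrightarrow> j < n + n * n \<Longrightarrow> (real j + 1) * (1 - a) \<le> (real m - real j) * a"
  shows "(real n)\<^sup>2 * bpmf m a n \<le> 1"
proof -
  have "bpmf m a n \<le> bpmf m a j" if "j \<in> {n..<n + n * n}" for j
  proof -
    have "1 ^ (j - n) * bpmf m a n \<le> bpmf m a (n + (j - n))"
    proof (rule ratio_chain_up)
      fix i assume "n \<le> i" "i < n + (j - n)"
      then show "1 * bpmf m a i \<le> bpmf m a (Suc i)"
        using that increasing[of i] assms(1,2) by (intro bpmf_step_up) auto
    qed simp
    then show ?thesis
      using that by simp
  qed
  then have "(\<Sum>j\<in>{n..<n + n * n}. bpmf m a n) \<le> (\<Sum>j\<in>{n..<n + n * n}. bpmf m a j)"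
    by (rule sum_mono)
  also have "\<dots> \<le> 1"
    using assms by (intro sum_bpmf_le_1) auto
  finally show ?thesis
    by (simp add: power2_eq_square)
qed

lemma bpmf_le_pred_at_small_index:
  assumes "0 \<le> a" "a \<le> 2/3" "1 \<le> n" "n \<le> 12"
  shows "bpmf m a n \<le> 500 * bpmf m a (n - 1) + 1 / (real n)\<^sup>2"
proof (cases "(real m - real n + 1) * a \<le> 500 * real n * (1 - a)")
  case True
  have "real (n - 1) = real n - 1"
    using assms(3) by (simp add: of_nat_diff)
  moreover have "1 / 500 * ((real m - real n + 1) * a) \<le> real n * (1 - a)"
    using True by simp
  ultimately have "1 / 500 * bpmf m a (Suc (n - 1)) \<le> bpmf m a (n - 1)"
    using assms(1,2) by (intro bpmf_step_down) (simp_all add: algebra_simps)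
  then have "bpmf m a n \<le> 500 * bpmf m a (n - 1)"
    using assms(3) by simp
  moreover have "0 \<le> 1 / (real n)\<^sup>2"
    by simp
  ultimately show ?thesis
    by linarith
next
  case False
  have "(real j + 1) * (1 - a) \<le> (real m - real j) * a" if "n \<le> j" "j < n + n * n" for j
  proof -
    have "real j + 1 \<le> 13 * real n" "real j - real n + 1 \<le> 12 * real n"
      using that assms(4) mult_le_mono1[OF assms(4), of n] by linarith+
    then have "(real j + 1) * (1 - a) + (real j - real n + 1) * a \<le> 13 * real n * (1 - a) + 12 * real n * a"
      using assms(1,2) by (intro add_mono mult_right_mono) auto
    also have "\<dots> \<le> 500 * real n * (1 - a)"
      using mult_right_mono[OF assms(2), of "real n"] by (simp add: algebra_simps)
    finally show ?thesis
      using False by (simp add: algebra_simps)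
  qed
  then have "(real n)\<^sup>2 * bpmf m a n \<le> 1"
    using assms by (intro bpmf_le_inverse_square) auto
  then have "bpmf m a n \<le> 1 / (real n)\<^sup>2"
    using assms(3) by (simp add: field_simps)
  moreover have "0 \<le> bpmf m a (n - 1)"
    using assms by (simp add: bpmf_nonneg)
  ultimately show ?thesis
    by linarith
qed

text \<open>The event \<open>X = Y = n\<close>, which has no counterpart in the tail of \<open>Bin(n - 1, b)\<close>.\<close>
lemma bpmf_mul_power_le:
  assumes "0 \<le> a" "a \<le> 2/3" "0 \<le> b" "b \<le> 2/3" "1 \<le> n" "v ^ 3 = real n" "0 < v"
  shows "bpmf m a n * b ^ n \<le> 10 ^ 56 / v * (bpmf m a (n - 1) * b ^ (n - 1)) + 1 / v ^ 6"
proof -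
  have "v ^ 6 = (v ^ 3)\<^sup>2"
    by (simp flip: power_mult)
  then have v6: "v ^ 6 = (real n)\<^sup>2"
    using assms(6) by simp
  have x: "0 \<le> bpmf m a n" "bpmf m a n \<le> 1" "0 \<le> bpmf m a (n - 1)"
    using assms by (simp_all add: bpmf_nonneg bpmf_le_1)
  have pw: "0 \<le> b ^ n" "b ^ n \<le> 1" "b ^ n \<le> b ^ (n - 1)"
    using assms by (auto simp: power_le_one power_decreasing)
  have rest: "0 \<le> 10 ^ 56 / v * (bpmf m a (n - 1) * b ^ (n - 1))"
    using assms x by simp
  show ?thesis
  proof (cases "13 \<le> n")
    case True
    have "bpmf m a n * b ^ n \<le> b ^ n"
      using x pw by (simp add: mult_left_le_one_le)
    also have "\<dots> \<le> 1 / v ^ 6"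
      unfolding v6 using assms True by (intro power_le_inverse_square) auto
    finally show ?thesis
      using rest by linarith
  next
    case False
    have "v ^ 3 < 3 ^ 3"
      using False assms(6) by simp
    then have "500 \<le> 10 ^ 56 / v"
      using assms(7) power_less_imp_less_base[of v 3 3] by (simp add: field_simps)
    have "bpmf m a n * b ^ n \<le> (500 * bpmf m a (n - 1) + 1 / (real n)\<^sup>2) * b ^ n"
      using False assms pw by (intro mult_right_mono bpmf_le_pred_at_small_index) auto
    also have "\<dots> = 500 * bpmf m a (n - 1) * b ^ n + b ^ n / (real n)\<^sup>2"
      by (simp add: distrib_right)
    also have "\<dots> \<le> 500 * bpmf m a (n - 1) * b ^ (n - 1) + 1 / (real n)\<^sup>2"
      using x pw by (intro add_mono mult_left_mono divide_right_mono) auto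
    also have "\<dots> \<le> 10 ^ 56 / v * (bpmf m a (n - 1) * b ^ (n - 1)) + 1 / v ^ 6"
      unfolding v6 mult.assoc using \<open>500 \<le> 10 ^ 56 / v\<close> x pw
      by (intro add_mono mult_right_mono) auto
    finally show ?thesis .
  qed
qed

section \<open>Adding a trial\<close>

lemma cdf_bpmf_Suc_ge:
  assumes "0 \<le> a" "a \<le> 2/3" "v ^ 3 = real N + 1" "0 < v"
  shows "(1 - 10 ^ 56 / v) * (\<Sum>i\<le>j. bpmf N a i) - 1 / v ^ 6 \<le> (\<Sum>i\<le>j. bpmf (Suc N) a i)"
  using mul_bpmf_le_cdf[OF assms, of j] by (simp add: sum_bpmf_Suc_atMost algebra_simps)

lemma tail_bpmf_Suc_le:
  assumes "0 \<le> b" "b \<le> 2/3" "v ^ 3 = real N + 1" "0 < v"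
  shows "(\<Sum>j\<in>{i..Suc N}. bpmf (Suc N) b j)
    \<le> (1 + 10 ^ 56 / v) * (\<Sum>j\<in>{i..N}. bpmf N b j) + 1 / v ^ 6
      + (if i = Suc N then b ^ Suc N else 0)"
proof -
  define T where "T = (\<Sum>j\<in>{i..N}. bpmf N b j)"
  have "0 \<le> T"
    using assms unfolding T_def by (auto intro: sum_nonneg simp: bpmf_nonneg)
  then have rest: "0 \<le> 10 ^ 56 / v * T" "0 \<le> 1 / v ^ 6" "0 \<le> (if i = Suc N then b ^ Suc N else 0)"
    using assms by auto
  have "(\<Sum>j\<in>{i..Suc N}. bpmf (Suc N) b j) \<le> T + 10 ^ 56 / v * T + 1 / v ^ 6
      + (if i = Suc N then b ^ Suc N else 0)"
  proof (cases i)
    case 0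
    have "(\<Sum>j\<in>{i..Suc N}. bpmf (Suc N) b j) = 1" "T = 1"
      unfolding T_def 0 by (subst sum_bpmf_from_eq, simp)+
    then show ?thesis
      using rest by simp
  next
    case (Suc k)
    have split: "(\<Sum>j\<in>{i..Suc N}. bpmf (Suc N) b j) = T + b * bpmf N b k"
      unfolding T_def Suc by (rule sum_bpmf_Suc_from)
    consider "k < N" | "k = N" | "N < k"
      by linarith
    then show ?thesis
    proof cases
      case 1
      have "b * bpmf N b k \<le> 10 ^ 56 / v * T + 1 / v ^ 6"
        using mul_bpmf_le_tail[OF assms 1] unfolding T_def Suc .
      then show ?thesis
        using split rest 1 Suc by simp
    next
      case 2
      have "T = 0" "b * bpmf N b k = b ^ Suc N"
        "(if i = Suc N then b ^ Suc N else 0) = b ^ Suc N"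
        unfolding T_def Suc 2 by (simp_all add: bpmf_def)
      then show ?thesis
        using split rest by linarith
    next
      case 3
      then show ?thesis
        using split rest Suc by (simp add: bpmf_eq_0)
    qed
  qed
  then show ?thesis
    unfolding T_def by (simp add: algebra_simps)
qed

lemma Pgap_eq_double_sum:
  assumes "0 \<le> p" "p \<le> 1" "0 \<le> q" "q \<le> 1"
  shows "Pgap m n p q =
    (\<Sum>i\<le>m. \<Sum>j\<le>n. if i \<le> j then bpmf m (max p q) i * bpmf n (min p q) j else 0)"
proof -
  define P where "P = pair_pmf (binomial_pmf m (max p q)) (binomial_pmf n (min p q))"
  define S where "S = {xy :: nat \<times> nat. fst xy \<le> snd xy}"
  define T where "T = {..m} \<times> {..n}"
  have "set_pmf P \<subseteq> T"
    using assms unfolding P_def T_def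
    by (auto simp: set_pmf_iff pmf_binomial_eq_bpmf dest: bpmf_nonzero_imp_le)
  then have "S \<inter> set_pmf P = (S \<inter> T) \<inter> set_pmf P"
    by auto
  then have "measure_pmf.prob P S = measure_pmf.prob P (S \<inter> T)"
    by (metis measure_Int_set_pmf)
  also have "\<dots> = sum (pmf P) (T \<inter> S)"
    by (subst measure_measure_pmf_finite) (auto simp: T_def Int_commute)
  also have "\<dots> = (\<Sum>x\<in>T. if x \<in> S then pmf P x else 0)"
    by (rule sum.inter_restrict) (simp add: T_def)
  also have "\<dots> = (\<Sum>i\<le>m. \<Sum>j\<le>n. (\<lambda>x. if x \<in> S then pmf P x else 0) (i, j))"
    unfolding T_def by (simp add: sum.cartesian_product)
  also have "\<dots> = (\<Sum>i\<le>m. \<Sum>j\<le>n. if i \<le> j then bpmf m (max p q) i * bpmf n (min p q) j else 0)"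
    using assms by (intro sum.cong refl) (auto simp: S_def P_def pmf_pair bpmf_def)
  finally show ?thesis
    unfolding Pgap_def P_def S_def by simp
qed

lemma Pgap_eq_sum_cdf:
  assumes "0 \<le> p" "p \<le> 1" "0 \<le> q" "q \<le> 1"
  shows "Pgap m n p q = (\<Sum>j\<le>n. bpmf n (min p q) j * (\<Sum>i\<le>j. bpmf m (max p q) i))"
proof -
  have "(\<Sum>i\<le>m. if i \<le> j then bpmf m (max p q) i * bpmf n (min p q) j else 0)
      = bpmf n (min p q) j * (\<Sum>i\<le>j. bpmf m (max p q) i)" for j
  proof -
    have "(\<Sum>i\<le>m. if i \<le> j then bpmf m (max p q) i * bpmf n (min p q) j else 0)
        = (\<Sum>i\<in>{..m} \<inter> {..j}. bpmf m (max p q) i * bpmf n (min p q) j)"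
      by (subst sum.inter_restrict) auto
    also have "\<dots> = (\<Sum>i\<le>j. bpmf m (max p q) i * bpmf n (min p q) j)"
      by (rule sum.mono_neutral_left) (auto dest: bpmf_nonzero_imp_le)
    finally show ?thesis
      by (simp add: sum_distrib_left mult.commute)
  qed
  then show ?thesis
    unfolding Pgap_eq_double_sum[OF assms] by (subst sum.swap) simp
qed

lemma Pgap_eq_sum_tail:
  assumes "0 \<le> p" "p \<le> 1" "0 \<le> q" "q \<le> 1"
  shows "Pgap m n p q = (\<Sum>i\<le>m. bpmf m (max p q) i * (\<Sum>j\<in>{i..n}. bpmf n (min p q) j))"
proof -
  have "(\<Sum>j\<le>n. if i \<le> j then bpmf m (max p q) i * bpmf n (min p q) j else 0)
      = bpmf m (max p q) i * (\<Sum>j\<in>{i..n}. bpmf n (min p q) j)" for i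
  proof -
    have "(\<Sum>j\<le>n. if i \<le> j then bpmf m (max p q) i * bpmf n (min p q) j else 0)
        = (\<Sum>j\<in>{..n} \<inter> {i..}. bpmf m (max p q) i * bpmf n (min p q) j)"
      by (subst sum.inter_restrict) auto
    also have "{..n} \<inter> {i..} = {i..n}"
      by auto
    finally show ?thesis
      by (simp add: sum_distrib_left)
  qed
  then show ?thesis
    using Pgap_eq_double_sum[OF assms] by simp
qed

lemma Pgap_Suc_left_ge:
  assumes "p \<in> {0..2/3}" "q \<in> {0..2/3}" "v ^ 3 = real N + 1" "0 < v"
  shows "(1 - 10 ^ 56 / v) * Pgap N n p q - 1 / v ^ 6 \<le> Pgap (Suc N) n p q"
proof -
  have pq: "0 \<le> p" "p \<le> 1" "0 \<le> q" "q \<le> 1"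
    using assms by auto
  define a b where "a = max p q" and "b = min p q"
  have ab: "0 \<le> a" "a \<le> 2/3" "0 \<le> b" "b \<le> 2/3"
    using assms unfolding a_def b_def by auto
  have "(1 - 10 ^ 56 / v) * Pgap N n p q - 1 / v ^ 6
      = (\<Sum>j\<le>n. bpmf n b j * ((1 - 10 ^ 56 / v) * (\<Sum>i\<le>j. bpmf N a i) + - 1 / v ^ 6))"
    unfolding sum_mul_affine sum_bpmf Pgap_eq_sum_cdf[OF pq] a_def b_def by simp
  also have "\<dots> \<le> (\<Sum>j\<le>n. bpmf n b j * (\<Sum>i\<le>j. bpmf (Suc N) a i))"
    using ab assms cdf_bpmf_Suc_ge by (intro sum_mono mult_left_mono) (auto simp: bpmf_nonneg)
  also have "\<dots> = Pgap (Suc N) n p q"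
    unfolding Pgap_eq_sum_cdf[OF pq] a_def b_def ..
  finally show ?thesis .
qed

lemma bpmf_mul_power_le_Pgap:
  assumes "0 \<le> p" "p \<le> 1" "0 \<le> q" "q \<le> 1"
  shows "bpmf m (max p q) N * min p q ^ N \<le> Pgap m N p q"
proof (cases "N \<le> m")
  case True
  have "bpmf m (max p q) N * (\<Sum>j\<in>{N..N}. bpmf N (min p q) j)
      \<le> (\<Sum>i\<le>m. bpmf m (max p q) i * (\<Sum>j\<in>{i..N}. bpmf N (min p q) j))"
    using True assms
    by (intro member_le_sum[where f = "\<lambda>i. bpmf m (max p q) i * (\<Sum>j\<in>{i..N}. bpmf N (min p q) j)"])
      (auto intro!: mult_nonneg_nonneg sum_nonneg bpmf_nonneg)
  then show ?thesis
    unfolding Pgap_eq_sum_tail[OF assms] by (simp add: bpmf_def)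
next
  case False
  then show ?thesis
    unfolding Pgap_def by (simp add: bpmf_eq_0)
qed

lemma Pgap_Suc_right_le:
  assumes "p \<in> {0..2/3}" "q \<in> {0..2/3}" "v ^ 3 = real N + 1" "0 < v"
  shows "Pgap m (Suc N) p q \<le> (1 + 2 * 10 ^ 56 / v) * Pgap m N p q + 2 / v ^ 6"
proof -
  have pq: "0 \<le> p" "p \<le> 1" "0 \<le> q" "q \<le> 1"
    using assms by auto
  define a b where "a = max p q" and "b = min p q"
  have ab: "0 \<le> a" "a \<le> 2/3" "0 \<le> b" "b \<le> 2/3"
    using assms unfolding a_def b_def by auto
  define x T where "x = bpmf m a" and "T = (\<lambda>i. \<Sum>j\<in>{i..N}. bpmf N b j)"
  define E where "E = (\<lambda>i. if i = Suc N then b ^ Suc N else 0)"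
  have "x i * (\<Sum>j\<in>{i..Suc N}. bpmf (Suc N) b j) \<le> x i * ((1 + 10 ^ 56 / v) * T i + 1 / v ^ 6 + E i)"
    for i
    unfolding T_def E_def x_def using ab
    by (intro mult_left_mono tail_bpmf_Suc_le assms(3,4)) (auto simp: bpmf_nonneg)
  then have "Pgap m (Suc N) p q \<le> (\<Sum>i\<le>m. x i * ((1 + 10 ^ 56 / v) * T i + 1 / v ^ 6 + E i))"
    unfolding Pgap_eq_sum_tail[OF pq] x_def a_def b_def by (intro sum_mono) (simp only: a_def b_def)
  also have "\<dots> = (1 + 10 ^ 56 / v) * Pgap m N p q + 1 / v ^ 6 + (\<Sum>i\<le>m. x i * E i)"
    unfolding Pgap_eq_sum_tail[OF pq] distrib_left sum.distrib
    by (simp add: sum_distrib_left x_def T_def a_def b_def mult.left_commute flip: sum_divide_distrib)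
      (simp add: sum_bpmf)
  also have "(\<Sum>i\<le>m. x i * E i) = x (Suc N) * b ^ Suc N"
  proof -
    have "(\<Sum>i\<le>m. x i * E i) = (\<Sum>i\<le>m. if i = Suc N then x (Suc N) * b ^ Suc N else 0)"
      unfolding E_def by (intro sum.cong) auto
    then show ?thesis
      by (simp add: x_def bpmf_eq_0)
  qed
  also have "x (Suc N) * b ^ Suc N \<le> 10 ^ 56 / v * Pgap m N p q + 1 / v ^ 6"
  proof -
    have "x (Suc N) * b ^ Suc N \<le> 10 ^ 56 / v * (x N * b ^ N) + 1 / v ^ 6"
      using bpmf_mul_power_le[of a b "Suc N" v m] ab assms unfolding x_def by simp
    moreover have "10 ^ 56 / v * (x N * b ^ N) \<le> 10 ^ 56 / v * Pgap m N p q"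
      using bpmf_mul_power_le_Pgap[OF pq] assms(4) unfolding x_def a_def b_def
      by (intro mult_left_mono) auto
    ultimately show ?thesis
      by linarith
  qed
  finally show ?thesis
    by (simp add: algebra_simps)
qed

theorem lemma3p3:
  "\<exists>C::real. C > 0 \<and>
     (\<forall>(m::nat) (n::nat) (p::real) (q::real).
        m \<ge> 1 \<longrightarrow> n \<ge> 1 \<longrightarrow> p \<in> {0..2/3} \<longrightarrow> q \<in> {0..2/3} \<longrightarrow>
        (1 - C * real m powr (-1/3)) * Pgap (m - 1) n p q - 2 * real m powr (-2)
          \<le> Pgap m n p q
        \<and> Pgap m n p q
          \<le> (1 + C * real n powr (-1/3)) * Pgap m (n - 1) p q + 2 * real n powr (-2))"
proof (intro exI[of _ "2 * 10 ^ 56"] conjI allI impI)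
  fix m n :: nat and p q :: real
  assume "m \<ge> 1" "n \<ge> 1" and pq: "p \<in> {0..2/3}" "q \<in> {0..2/3}"
  then obtain M N where m: "m = Suc M" and n: "n = Suc N"
    by (metis One_nat_def Suc_le_D)
  define v w where "v = real m powr (1/3)" and "w = real n powr (1/3)"
  note v = cube_root_powr[of "real m", folded v_def] and w = cube_root_powr[of "real n", folded w_def]
  have "(1 - 10 ^ 56 / v) * Pgap M n p q - 1 / v ^ 6 \<le> Pgap m n p q"
    using Pgap_Suc_left_ge[OF pq, of v M n] v m by simp
  moreover have "0 \<le> 10 ^ 56 / v * Pgap M n p q + 1 / v ^ 6"
    using v m unfolding Pgap_def by simp
  moreover have "(1 - 2 * 10 ^ 56 * real m powr (-1/3)) * Pgap (m - 1) n p q - 2 * real m powr (-2)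
      = ((1 - 10 ^ 56 / v) * Pgap M n p q - 1 / v ^ 6) - (10 ^ 56 / v * Pgap M n p q + 1 / v ^ 6)"
    using v m by (simp add: algebra_simps)
  ultimately show "(1 - 2 * 10 ^ 56 * real m powr (-1/3)) * Pgap (m - 1) n p q - 2 * real m powr (-2)
      \<le> Pgap m n p q"
    by linarith
  show "Pgap m n p q
      \<le> (1 + 2 * 10 ^ 56 * real n powr (-1/3)) * Pgap m (n - 1) p q + 2 * real n powr (-2)"
    using Pgap_Suc_right_le[OF pq, of w N m] w n by simp
qed simp

end
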